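(* Let $p$ be a prime and $q=1/p$. For integers $n\ge1$, $\mu\ge1$, let $P(n,p^\mu)$ be the probability that a random symmetric $n\times n$ matrix over $\mathbf{Z}_{p^\mu}$ has determinant $\not\equiv 0\pmod{p^\mu}$, and extend this by the boundary conditions $P(0,p^\mu)=1$ for $\mu>0$ and $P(n,p^\mu)=0$ for $\mu\le 0$ (all $n\ge 0$). Then for all $n>0$ and $\mu>0$, $$P(n,p^\mu)=(1-q)P(n-1,p^\mu)+q(1-q^{n-1})P(n-2,p^\mu)+q^n(1-q)P(n-1,p^{\mu-1})+q^{n+1}P(n,p^{\mu-2}),$$ where for $n=1$ the second term (whose coefficient $q(1-q^{0})$ vanishes) is taken to be $0$.
   Context: For a positive integer $m$, $\mathbf{Z}_m=\{1,2,\ldots,m\}$ (viewed as residues mod $m$). A random symmetric $n\times n$ matrix over $\mathbf{Z}_m$ is one whose entries $a_{ij}$, $i\le j$, are chosen independently and uniformly from $\mathbf{Z}_m$, with $a_{ji}=a_{ij}$. *)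

theory Defs
  imports Complex_Main "Jordan_Normal_Form.Determinant"
begin

text \<open>Symmetric n x n matrices with entries in Z_m = {1,...,m}, represented as
  functions on indices, with entries fixed to 0 outside the n x n range
  (so that the set is in bijection with the actual matrices).\<close>
definition sym_mats :: "nat \<Rightarrow> nat \<Rightarrow> (nat \<Rightarrow> nat \<Rightarrow> int) set" where
  "sym_mats n m = {A. (\<forall>i j. i < n \<and> j < n \<longrightarrow> A i j \<in> {1..int m} \<and> A i j = A j i)
                     \<and> (\<forall>i j. \<not> (i < n \<and> j < n) \<longrightarrow> A i j = 0)}"

definition to_mat :: "nat \<Rightarrow> (nat \<Rightarrow> nat \<Rightarrow> int) \<Rightarrow> int mat" where
  "to_mat n A = mat n n (\<lambda>(i, j). A i j)"

definition P_nonsing :: "nat \<Rightarrow> nat \<Rightarrow> real" where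
  "P_nonsing n m = real (card {A \<in> sym_mats n m. \<not> (int m dvd det (to_mat n A))})
                   / real (card (sym_mats n m))"

definition Pb :: "nat \<Rightarrow> nat \<Rightarrow> int \<Rightarrow> real" where
  "Pb p n \<mu> = (if \<mu> \<le> 0 then 0 else if n = 0 then 1 else P_nonsing n (p ^ nat \<mu>))"

end

theory Submission
  imports Defs "HOL-Number_Theory.Cong"
begin

text \<open>A symmetric (k + 1) \<times> (k + 1) matrix is a symmetric k \<times> k matrix C bordered by a column v and a
  corner entry a. Modulo M = p^m, whether the determinant vanishes is decided class by class:
  \<^item> if a is a unit, the Schur complement C - b v v^T (with a b \<equiv> 1) carries the determinant, and C \<mapsto> C - b v v^T
    is a translation, hence a bijection of the k \<times> k matrices;
  \<^item> if p divides a but not some v j, moving j to position k makes the 2 \<times> 2 corner block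
    invertible, and its Schur complement has size k - 1;
  \<^item> if p divides v and exactly divides a, pulling p out of the last row leaves the unit pivot a / p,
    and only the k \<times> k Schur complement modulo p^(m-1) matters;
  \<^item> if p divides v and p^2 divides a, pulling p out of the last row and column leaves a
    (k + 1) \<times> (k + 1) matrix that matters only modulo p^(m-2).
  Counting the borders in each class and dividing by the number of all matrices gives the four
  terms of the recurrence.\<close>

section \<open>Counting along fibres\<close>

lemma card_filter_bij_betw:
  assumes "bij_betw g S T"
  shows "card {x\<in>S. Q (g x)} = card {y\<in>T. Q y}"
proof -
  have "bij_betw g {x\<in>S. Q (g x)} {y\<in>T. Q y}"
    using assms by (auto simp: bij_betw_def inj_on_def)
  then show ?thesis by (rule bij_betw_same_card)
qed

lemma sum_comp_fibers_const:
  fixes h :: "'b \<Rightarrow> 'c::comm_semiring_1"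
  assumes "finite X" "finite Y" "g ` X \<subseteq> Y" "\<And>y. y \<in> Y \<Longrightarrow> card {x\<in>X. g x = y} = c"
  shows "(\<Sum>x\<in>X. h (g x)) = of_nat c * (\<Sum>y\<in>Y. h y)"
proof -
  have "(\<Sum>x\<in>X. h (g x)) = (\<Sum>y\<in>Y. \<Sum>x\<in>{x\<in>X. g x = y}. h (g x))"
    using sum.group[OF assms(1-3), of "\<lambda>x. h (g x)"] by simp
  also have "\<dots> = (\<Sum>y\<in>Y. \<Sum>x\<in>{x\<in>X. g x = y}. h y)"
    by (intro sum.cong) auto
  also have "\<dots> = (\<Sum>y\<in>Y. of_nat c * h y)"
    using assms(4) by (intro sum.cong) auto
  finally show ?thesis by (simp add: sum_distrib_left)
qed

lemma card_filter_comp_fibers_const: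
  assumes "finite X" "finite Y" "g ` X \<subseteq> Y" "\<And>y. y \<in> Y \<Longrightarrow> card {x\<in>X. g x = y} = c"
  shows "card {x\<in>X. Q (g x)} = c * card {y\<in>Y. Q y}"
proof -
  have "card {x\<in>X. Q (g x)} = (\<Sum>x\<in>X. of_bool (Q (g x)) :: nat)"
    using assms(1) by (simp add: sum_of_bool_eq Int_def conj_commute)
  also have "\<dots> = c * (\<Sum>y\<in>Y. of_bool (Q y))"
    using sum_comp_fibers_const[OF assms, of "\<lambda>y. of_bool (Q y) :: nat"] by simp
  also have "\<dots> = c * card {y\<in>Y. Q y}"
    using assms(2) by (simp add: sum_of_bool_eq Int_def conj_commute)
  finally show ?thesis .
qed

lemma card_mod_eq_atLeastLessThan:
  fixes M M' :: nat and r :: int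
  assumes "0 < M'" "M' dvd M" "0 \<le> r" "r < int M'"
  shows "card {x \<in> {0..<int M}. x mod int M' = r} = M div M'"
proof -
  obtain c where M: "M = M' * c" using assms(2) by blast
  have "{x \<in> {0..<int M}. x mod int M' = r} = (\<lambda>t. r + int M' * int t) ` {0..<c}"
  proof (intro equalityI subsetI)
    fix x assume x: "x \<in> {x \<in> {0..<int M}. x mod int M' = r}"
    then have "x div int M' < int c"
      using M assms(1) by (smt (verit) mult_div_mod_eq mult_left_less_imp_less pos_mod_sign
        of_nat_0_less_iff of_nat_mult mem_Collect_eq atLeastLessThan_iff)
    moreover have "0 \<le> x div int M'" using x assms(1) by (simp add: pos_imp_zdiv_nonneg_iff)
    moreover have "x = r + int M' * (x div int M')"
      using x by (metis (mono_tags, lifting) mem_Collect_eq mod_mult_div_eq add.commute)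
    ultimately show "x \<in> (\<lambda>t. r + int M' * int t) ` {0..<c}"
      by (intro image_eqI[where x = "nat (x div int M')"]) auto
  next
    fix x assume "x \<in> (\<lambda>t. r + int M' * int t) ` {0..<c}"
    then obtain t where t: "t < c" "x = r + int M' * int t" by auto
    have "int M' * (int t + 1) \<le> int M' * int c"
      using t(1) by (intro mult_left_mono) auto
    then show "x \<in> {x \<in> {0..<int M}. x mod int M' = r}"
      using t assms M by (auto simp: algebra_simps)
  qed
  moreover have "inj_on (\<lambda>t. r + int M' * int t) {0..<c}" using assms(1) by (auto simp: inj_on_def)
  ultimately show ?thesis using M assms(1) by (simp add: card_image)
qed

section \<open>Symmetric matrices with prescribed entry sets\<close>

definition vec_space :: "nat \<Rightarrow> (nat \<Rightarrow> 'a::zero set) \<Rightarrow> (nat \<Rightarrow> 'a) set" where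
  "vec_space k B = {v. (\<forall>i<k. v i \<in> B i) \<and> (\<forall>i\<ge>k. v i = 0)}"

lemma bij_betw_restrict_vec_space:
  "bij_betw (\<lambda>v. restrict v {..<k}) (vec_space k B) (Pi\<^sub>E {..<k} B)"
  by (rule bij_betw_byWitness[where f' = "\<lambda>f i. if i < k then f i else 0"])
     (auto simp: vec_space_def fun_eq_iff PiE_def extensional_def)

lemma card_vec_space: "card (vec_space k B) = (\<Prod>i<k. card (B i))"
  using bij_betw_same_card[OF bij_betw_restrict_vec_space] by (simp add: card_PiE)

lemma finite_vec_space: "(\<And>i. i < k \<Longrightarrow> finite (B i)) \<Longrightarrow> finite (vec_space k B)"
  by (subst bij_betw_finite[OF bij_betw_restrict_vec_space]) (auto intro: finite_PiE)

definition sym_space :: "nat \<Rightarrow> (nat \<Rightarrow> nat \<Rightarrow> 'a::zero set) \<Rightarrow> (nat \<Rightarrow> nat \<Rightarrow> 'a) set" where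
  "sym_space n B = {A. (\<forall>i j. i < n \<and> j < n \<longrightarrow> A i j \<in> B i j \<and> A i j = A j i)
                     \<and> (\<forall>i j. \<not> (i < n \<and> j < n) \<longrightarrow> A i j = 0)}"

definition border :: "nat \<Rightarrow> (nat \<Rightarrow> nat \<Rightarrow> 'a::zero) \<Rightarrow> (nat \<Rightarrow> 'a) \<Rightarrow> 'a \<Rightarrow> nat \<Rightarrow> nat \<Rightarrow> 'a" where
  "border k C v a = (\<lambda>i j. if i < k \<and> j < k then C i j else if i = k \<and> j < k then v j
     else if j = k \<and> i < k then v i else if i = k \<and> j = k then a else 0)"

lemma sym_space_0: "sym_space 0 B = {\<lambda>_ _. 0}"
  by (auto simp: sym_space_def fun_eq_iff)

lemma border_last_row: "j < Suc k \<Longrightarrow> border k C v a k j = (if j = k then a else v j)"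
  by (simp add: border_def)

lemma border_in_sym_space:
  assumes "\<And>i j. B i j = B j i" "C \<in> sym_space k B" "v \<in> vec_space k (\<lambda>i. B i k)" "a \<in> B k k"
  shows "border k C v a \<in> sym_space (Suc k) B"
  using assms unfolding sym_space_def vec_space_def border_def by (auto simp: less_Suc_eq)

lemma border_eq_border_iff:
  assumes "C \<in> sym_space k B1" "C' \<in> sym_space k B2" "v \<in> vec_space k B3" "v' \<in> vec_space k B4"
  shows "border k C v a = border k C' v' a' \<longleftrightarrow> C = C' \<and> v = v' \<and> a = a'"
proof
  assume eq: "border k C v a = border k C' v' a'"
  have "C i j = C' i j" for i j
    using fun_cong[OF fun_cong[OF eq, of i], of j] assms
    by (cases "i < k \<and> j < k") (auto simp: border_def sym_space_def)
  moreover have "v i = v' i" for i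
    using fun_cong[OF fun_cong[OF eq, of k], of i] assms
    by (cases "i < k") (auto simp: border_def vec_space_def)
  moreover have "a = a'" using fun_cong[OF fun_cong[OF eq, of k], of k] by (simp add: border_def)
  ultimately show "C = C' \<and> v = v' \<and> a = a'" by (auto simp: fun_eq_iff)
qed simp

lemma inj_on_border: "inj_on (\<lambda>(C, v, a). border k C v a) (sym_space k B \<times> vec_space k B' \<times> X)"
  by (auto intro!: inj_onI simp: border_eq_border_iff)

lemma sym_space_Suc:
  assumes "\<And>i j. B i j = B j i"
  shows "sym_space (Suc k) B =
    (\<lambda>(C, v, a). border k C v a) ` (sym_space k B \<times> vec_space k (\<lambda>i. B i k) \<times> B k k)"
proof (intro equalityI subsetI)
  fix A assume A: "A \<in> sym_space (Suc k) B"
  let ?C = "\<lambda>i j. if i < k \<and> j < k then A i j else 0" and ?v = "\<lambda>i. if i < k then A i k else 0"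
  have "A = border k ?C ?v (A k k)"
    using A by (auto simp: sym_space_def border_def fun_eq_iff less_Suc_eq)
  moreover have "(?C, ?v, A k k) \<in> sym_space k B \<times> vec_space k (\<lambda>i. B i k) \<times> B k k"
    using A by (auto simp: sym_space_def vec_space_def)
  ultimately show "A \<in> (\<lambda>(C, v, a). border k C v a) ` (sym_space k B \<times> vec_space k (\<lambda>i. B i k) \<times> B k k)"
    by (intro image_eqI) auto
qed (auto intro: border_in_sym_space[OF assms])

fun tri :: "nat \<Rightarrow> nat" where
  "tri 0 = 0"
| "tri (Suc k) = tri k + Suc k"

lemma card_sym_space:
  assumes "\<And>i j. B i j = B j i" "\<And>i j. i < n \<Longrightarrow> j < n \<Longrightarrow> card (B i j) = c"
  shows "card (sym_space n B) = c ^ tri n"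
  using assms(2)
proof (induction n)
  case 0
  then show ?case by (simp add: sym_space_0)
next
  case (Suc k)
  have "card (sym_space (Suc k) B) = card (sym_space k B \<times> vec_space k (\<lambda>i. B i k) \<times> B k k)"
    unfolding sym_space_Suc[OF assms(1)] by (rule card_image[OF inj_on_border])
  also have "\<dots> = c ^ tri k * c ^ k * c"
    using Suc by (simp add: card_cartesian_product card_vec_space)
  finally show ?case by (simp add: power_add)
qed

lemma finite_sym_space:
  assumes "\<And>i j. B i j = B j i" "\<And>i j. finite (B i j)"
  shows "finite (sym_space n B)"
proof (induction n)
  case 0
  then show ?case by (simp add: sym_space_0)
next
  case (Suc k)
  then show ?case using assms by (simp add: sym_space_Suc finite_vec_space)
qed

lemma card_sym_space_Suc_filter:
  assumes "\<And>i j. B i j = B j i" "\<And>i j. finite (B i j)"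
  shows "card {A \<in> sym_space (Suc k) B. Q A} =
    (\<Sum>(v, a)\<in>vec_space k (\<lambda>i. B i k) \<times> B k k. card {C \<in> sym_space k B. Q (border k C v a)})"
proof -
  let ?Y = "vec_space k (\<lambda>i. B i k) \<times> B k k"
  let ?F = "\<lambda>y. {C \<in> sym_space k B. Q (border k C (fst y) (snd y))}"
  let ?b = "\<lambda>(y, C). border k C (fst y) (snd y)"
  have eq: "{A \<in> sym_space (Suc k) B. Q A} = ?b ` Sigma ?Y ?F"
    unfolding sym_space_Suc[OF assms(1)] by force
  have "inj_on ?b (Sigma ?Y ?F)"
    by (auto intro!: inj_onI simp: border_eq_border_iff)
  then have "card {A \<in> sym_space (Suc k) B. Q A} = card (Sigma ?Y ?F)"
    unfolding eq by (rule card_image)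
  also have "\<dots> = (\<Sum>y\<in>?Y. card (?F y))"
    using assms by (intro card_SigmaI) (auto simp: finite_vec_space finite_sym_space)
  finally show ?thesis by (simp add: case_prod_beta)
qed

text \<open>Residues modulo M are represented by 0, ..., M - 1, whereas \<open>sym_mats\<close> uses 1, ..., M;
  \<open>P_nonsing_eq_nonsing_density\<close> translates between the two.\<close>
abbreviation sym_res :: "nat \<Rightarrow> nat \<Rightarrow> (nat \<Rightarrow> nat \<Rightarrow> int) set" where
  "sym_res n M \<equiv> sym_space n (\<lambda>_ _. {0..<int M})"

abbreviation res_vecs :: "nat \<Rightarrow> nat \<Rightarrow> (nat \<Rightarrow> int) set" where
  "res_vecs k M \<equiv> vec_space k (\<lambda>_. {0..<int M})"

lemma finite_sym_res: "finite (sym_res n M)"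
  by (rule finite_sym_space) auto

definition mod_entries :: "nat \<Rightarrow> (nat \<Rightarrow> nat \<Rightarrow> int) \<Rightarrow> nat \<Rightarrow> nat \<Rightarrow> int" where
  "mod_entries M A = (\<lambda>i j. A i j mod int M)"

lemma mod_entries_in_sym_res: "0 < M' \<Longrightarrow> C \<in> sym_res n M \<Longrightarrow> mod_entries M' C \<in> sym_res n M'"
  by (auto simp: sym_space_def mod_entries_def)

lemma sym_res_mod_entries_fiber:
  assumes "D \<in> sym_res n M'"
  shows "{C \<in> sym_res n M. mod_entries M' C = D} =
    sym_space n (\<lambda>i j. {x \<in> {0..<int M}. x mod int M' = D i j})"
proof (intro equalityI subsetI)
  fix C assume "C \<in> {C \<in> sym_res n M. mod_entries M' C = D}"
  then show "C \<in> sym_space n (\<lambda>i j. {x \<in> {0..<int M}. x mod int M' = D i j})"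
    by (auto simp: sym_space_def mod_entries_def)
next
  fix C assume C: "C \<in> sym_space n (\<lambda>i j. {x \<in> {0..<int M}. x mod int M' = D i j})"
  have "mod_entries M' C i j = D i j" for i j
    using C assms by (cases "i < n \<and> j < n") (auto simp: sym_space_def mod_entries_def)
  with C show "C \<in> {C \<in> sym_res n M. mod_entries M' C = D}"
    by (auto simp: sym_space_def)
qed

lemma card_sym_res_mod_entries:
  assumes "0 < M'" "M' dvd M"
  shows "card {C \<in> sym_res n M. Q (mod_entries M' C)} = (M div M') ^ tri n * card {D \<in> sym_res n M'. Q D}"
proof (rule card_filter_comp_fibers_const[OF finite_sym_res finite_sym_res])
  show "mod_entries M' ` sym_res n M \<subseteq> sym_res n M'"
    using assms(1) by (auto intro: mod_entries_in_sym_res)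
next
  fix D assume D: "D \<in> sym_res n M'"
  have "D i j = D j i" for i j
    using D by (cases "i < n \<and> j < n") (auto simp: sym_space_def)
  moreover have "card {x \<in> {0..<int M}. x mod int M' = D i j} = M div M'" if "i < n" "j < n" for i j
    using D that by (intro card_mod_eq_atLeastLessThan[OF assms]) (auto simp: sym_space_def)
  ultimately show "card {C \<in> sym_res n M. mod_entries M' C = D} = (M div M') ^ tri n"
    unfolding sym_res_mod_entries_fiber[OF D] by (intro card_sym_space) auto
qed

section \<open>Determinants modulo m\<close>

lemma to_mat_carrier: "to_mat n A \<in> carrier_mat n n"
  by (simp add: to_mat_def)

lemma to_mat_cong: "(\<And>i j. i < n \<Longrightarrow> j < n \<Longrightarrow> A i j = B i j) \<Longrightarrow> to_mat n A = to_mat n B"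
  by (rule eq_matI) (auto simp: to_mat_def)

lemma det_cong:
  fixes A B :: "int mat"
  assumes "A \<in> carrier_mat n n" "B \<in> carrier_mat n n"
    and "\<And>i j. i < n \<Longrightarrow> j < n \<Longrightarrow> [A $$ (i, j) = B $$ (i, j)] (mod m)"
  shows "[det A = det B] (mod m)"
  unfolding det_def'[OF assms(1)] det_def'[OF assms(2)]
  by (intro cong_sum cong_mult cong_refl cong_prod) (auto intro!: assms(3) simp: permutes_in_image)

lemma det_to_mat_cong:
  "(\<And>i j. i < n \<Longrightarrow> j < n \<Longrightarrow> [A i j = B i j] (mod m)) \<Longrightarrow> [det (to_mat n A) = det (to_mat n B)] (mod m)"
  by (rule det_cong[OF to_mat_carrier to_mat_carrier]) (simp add: to_mat_def)

definition nonsing_mod :: "nat \<Rightarrow> nat \<Rightarrow> (nat \<Rightarrow> nat \<Rightarrow> int) \<Rightarrow> bool" where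
  "nonsing_mod M n A \<longleftrightarrow> \<not> int M dvd det (to_mat n A)"

lemma nonsing_mod_cong:
  "(\<And>i j. i < n \<Longrightarrow> j < n \<Longrightarrow> [A i j = B i j] (mod int M)) \<Longrightarrow> nonsing_mod M n A \<longleftrightarrow> nonsing_mod M n B"
  unfolding nonsing_mod_def using det_to_mat_cong cong_dvd_iff by blast

lemma nonsing_mod_mod_entries: "nonsing_mod M n (mod_entries M A) \<longleftrightarrow> nonsing_mod M n A"
  by (rule nonsing_mod_cong) (simp add: mod_entries_def cong_def)

lemma nonsing_mod_iff_det_cong_unit:
  assumes "[det (to_mat n A) = det (to_mat n' B) * u] (mod int M)" "coprime u (int M)"
  shows "nonsing_mod M n A \<longleftrightarrow> nonsing_mod M n' B"
proof -
  have "int M dvd det (to_mat n A) \<longleftrightarrow> int M dvd det (to_mat n' B) * u"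
    by (rule cong_dvd_iff[OF assms(1)])
  also have "\<dots> \<longleftrightarrow> int M dvd det (to_mat n' B)"
    using assms(2) by (simp add: coprime_commute coprime_dvd_mult_left_iff)
  finally show ?thesis unfolding nonsing_mod_def by simp
qed

lemma mat_minus_plus_cancel:
  fixes A B :: "'a::ab_group_add mat"
  assumes "A \<in> carrier_mat n m" "B \<in> carrier_mat n m"
  shows "(A - B) + B = A"
  by (rule eq_matI) (use assms in auto)

lemma det_four_block_mat_eliminate:
  fixes C V U B X :: "'a::idom mat"
  assumes C: "C \<in> carrier_mat k k" and V: "V \<in> carrier_mat k r" and U: "U \<in> carrier_mat r k"
    and B: "B \<in> carrier_mat r r" and X: "X \<in> carrier_mat k r"
  shows "det (four_block_mat C V U B) = det (four_block_mat (C - X * U) (V - X * B) U B)"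
proof -
  let ?E = "four_block_mat (1\<^sub>m k) X (0\<^sub>m r k) (1\<^sub>m r)"
  have XU: "X * U \<in> carrier_mat k k" and XB: "X * B \<in> carrier_mat k r" using X U B by auto
  have CXU: "C - X * U \<in> carrier_mat k k" by (rule minus_carrier_mat[OF XU])
  have VXB: "V - X * B \<in> carrier_mat k r" by (rule minus_carrier_mat[OF XB])
  have "?E * four_block_mat (C - X * U) (V - X * B) U B =
      four_block_mat (1\<^sub>m k * (C - X * U) + X * U) (1\<^sub>m k * (V - X * B) + X * B)
        (0\<^sub>m r k * (C - X * U) + 1\<^sub>m r * U) (0\<^sub>m r k * (V - X * B) + 1\<^sub>m r * B)"
    by (rule mult_four_block_mat[OF one_carrier_mat X zero_carrier_mat one_carrier_mat CXU VXB U B])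
  also have "\<dots> = four_block_mat C V U B"
    by (simp add: left_mult_one_mat[OF CXU] left_mult_one_mat[OF VXB] left_mult_zero_mat[OF CXU]
      left_mult_zero_mat[OF VXB] left_mult_one_mat[OF U] left_mult_one_mat[OF B]
      left_add_zero_mat[OF U] left_add_zero_mat[OF B]
      mat_minus_plus_cancel[OF C XU] mat_minus_plus_cancel[OF V XB])
  finally have "det (four_block_mat C V U B) = det ?E * det (four_block_mat (C - X * U) (V - X * B) U B)"
    by (metis det_mult four_block_carrier_mat[OF one_carrier_mat one_carrier_mat] four_block_carrier_mat[OF CXU B])
  moreover have "det ?E = 1"
    using det_four_block_mat_lower_left_zero[OF one_carrier_mat X refl one_carrier_mat] by simp
  ultimately show ?thesis by simp
qed

lemma det_four_block_mat_cong:
  fixes C V U B X :: "int mat"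
  assumes C: "C \<in> carrier_mat k k" and V: "V \<in> carrier_mat k r" and U: "U \<in> carrier_mat r k"
    and B: "B \<in> carrier_mat r r" and X: "X \<in> carrier_mat k r"
    and VXB: "\<And>i j. i < k \<Longrightarrow> j < r \<Longrightarrow> [V $$ (i, j) = (X * B) $$ (i, j)] (mod m)"
  shows "[det (four_block_mat C V U B) = det (C - X * U) * det B] (mod m)"
proof -
  let ?A = "four_block_mat (C - X * U) (V - X * B) U B"
  let ?Z = "four_block_mat (C - X * U) (0\<^sub>m k r) U B"
  have XB: "X * B \<in> carrier_mat k r" using X B by auto
  have CXU: "C - X * U \<in> carrier_mat k k" using X U by auto
  have "[det ?A = det ?Z] (mod m)"
  proof (rule det_cong[OF four_block_carrier_mat[OF CXU B] four_block_carrier_mat[OF CXU B]])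
    fix i j assume ij: "i < k + r" "j < k + r"
    have dims: "dim_row (C - X * U) = k" "dim_col (C - X * U) = k" "dim_row B = r" "dim_col B = r"
      using CXU B by auto
    show "[?A $$ (i, j) = ?Z $$ (i, j)] (mod m)"
    proof (cases "i < k \<and> \<not> j < k")
      case True
      then have jk: "j - k < r" using ij by arith
      have "?A $$ (i, j) = V $$ (i, j - k) - (X * B) $$ (i, j - k)"
        using True ij jk dims index_minus_mat(1)[of i "X * B" "j - k" V] XB by simp
      moreover have "?Z $$ (i, j) = 0" using True ij jk dims by simp
      moreover have "[V $$ (i, j - k) - (X * B) $$ (i, j - k) = 0] (mod m)"
        using VXB[of i "j - k"] True jk by (simp add: cong_iff_dvd_diff cong_0_iff)
      ultimately show ?thesis by simp
    qed (use ij dims in auto)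
  qed
  moreover have "det ?Z = det (C - X * U) * det B"
    by (rule det_four_block_mat_upper_right_zero[OF CXU refl U B])
  ultimately show ?thesis using det_four_block_mat_eliminate[OF C V U B X] by simp
qed

lemma to_mat_add_split:
  "to_mat (k + r) A = four_block_mat (to_mat k A) (mat k r (\<lambda>(i, l). A i (k + l)))
     (mat r k (\<lambda>(l, j). A (k + l) j)) (mat r r (\<lambda>(l, l'). A (k + l) (k + l')))"
  by (rule eq_matI) (auto simp: to_mat_def)

lemma det_to_mat_pivot_cong:
  fixes A :: "nat \<Rightarrow> nat \<Rightarrow> int"
  assumes "[A k k * b = 1] (mod m)"
  shows "[det (to_mat (Suc k) A) = det (to_mat k (\<lambda>i j. A i j - b * A i k * A k j)) * A k k] (mod m)"
proof -
  let ?V = "mat k 1 (\<lambda>(i, l). A i (k + l))"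
  let ?U = "mat 1 k (\<lambda>(l, j). A (k + l) j)"
  let ?B = "mat 1 1 (\<lambda>(l, l'). A (k + l) (k + l'))"
  let ?X = "mat k 1 (\<lambda>(i, l). b * A i k)"
  have "[det (four_block_mat (to_mat k A) ?V ?U ?B) = det (to_mat k A - ?X * ?U) * det ?B] (mod m)"
  proof (rule det_four_block_mat_cong[OF to_mat_carrier mat_carrier mat_carrier mat_carrier mat_carrier])
    fix i j :: nat assume "i < k" "j < 1"
    moreover have "[A i k * (A k k * b) = A i k * 1] (mod m)" by (rule cong_mult[OF cong_refl assms])
    ultimately show "[?V $$ (i, j) = (?X * ?B) $$ (i, j)] (mod m)"
      by (simp add: scalar_prod_def ac_simps cong_sym)
  qed
  moreover have "to_mat k A - ?X * ?U = to_mat k (\<lambda>i j. A i j - b * A i k * A k j)"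
    by (rule eq_matI) (auto simp: to_mat_def scalar_prod_def)
  ultimately show ?thesis
    using to_mat_add_split[of k 1 A] by (simp add: det_single)
qed

lemma det_mat_2x2:
  fixes f :: "nat \<Rightarrow> nat \<Rightarrow> int"
  shows "det (mat 2 2 (\<lambda>(l, l'). f l l')) = f 0 0 * f 1 1 - f 0 1 * f 1 0"
proof -
  let ?b = "\<lambda>z. mat 1 1 (\<lambda>_. z)"
  have blocks: "mat 2 2 (\<lambda>(l, l'). f l l') =
    four_block_mat (?b (f 0 0)) (?b (f 0 1)) (?b (f 1 0)) (?b (f 1 1))"
    by (rule eq_matI) (auto simp: less_Suc_eq)
  have comm: "?b (f 1 0) * ?b (f 1 1) = ?b (f 1 1) * ?b (f 1 0)"
    by (rule eq_matI) (auto simp: scalar_prod_def)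
  have "det (mat 2 2 (\<lambda>(l, l'). f l l')) = det (?b (f 0 0) * ?b (f 1 1) - ?b (f 0 1) * ?b (f 1 0))"
    unfolding blocks by (rule det_four_block_mat[OF mat_carrier mat_carrier mat_carrier mat_carrier comm])
  also have "\<dots> = f 0 0 * f 1 1 - f 0 1 * f 1 0"
    by (subst det_single) (auto simp: scalar_prod_def)
  finally show ?thesis .
qed

lemma det_to_mat_pivot2_cong:
  fixes A :: "nat \<Rightarrow> nat \<Rightarrow> int" and k :: nat
  defines "c \<equiv> A k k" and "x \<equiv> A k (Suc k)" and "y \<equiv> A (Suc k) k" and "a \<equiv> A (Suc k) (Suc k)"
  assumes inv: "[(c * a - x * y) * e = 1] (mod m)"
  shows "[det (to_mat (Suc (Suc k)) A) = det (to_mat k (\<lambda>i j. A i j -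
     e * ((A i k * a - A i (Suc k) * y) * A k j + (A i (Suc k) * c - A i k * x) * A (Suc k) j)))
     * (c * a - x * y)] (mod m)"
proof -
  let ?V = "mat k 2 (\<lambda>(i, l). A i (k + l))"
  let ?U = "mat 2 k (\<lambda>(l, j). A (k + l) j)"
  let ?B = "mat 2 2 (\<lambda>(l, l'). A (k + l) (k + l'))"
  let ?X = "mat k 2 (\<lambda>(i, l). if l = 0 then e * (A i k * a - A i (Suc k) * y)
                                        else e * (A i (Suc k) * c - A i k * x))"
  have two: "{0..<2::nat} = {0, 1}" by auto
  have "[det (four_block_mat (to_mat k A) ?V ?U ?B) = det (to_mat k A - ?X * ?U) * det ?B] (mod m)"
  proof (rule det_four_block_mat_cong[OF to_mat_carrier mat_carrier mat_carrier mat_carrier mat_carrier])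
    fix i j :: nat assume ij: "i < k" "j < 2"
    then have "(?X * ?B) $$ (i, j) = A i (k + j) * ((c * a - x * y) * e)"
      by (cases j) (auto simp: scalar_prod_def two c_def x_def y_def a_def algebra_simps)
    moreover have "[A i (k + j) * ((c * a - x * y) * e) = A i (k + j) * 1] (mod m)"
      by (rule cong_mult[OF cong_refl inv])
    ultimately show "[?V $$ (i, j) = (?X * ?B) $$ (i, j)] (mod m)"
      using ij by (simp add: cong_sym)
  qed
  moreover have "to_mat k A - ?X * ?U = to_mat k (\<lambda>i j. A i j -
     e * ((A i k * a - A i (Suc k) * y) * A k j + (A i (Suc k) * c - A i k * x) * A (Suc k) j))"
    by (rule eq_matI) (auto simp: to_mat_def scalar_prod_def two algebra_simps)
  moreover have "det ?B = c * a - x * y"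
    using det_mat_2x2[of "\<lambda>l l'. A (k + l) (k + l')"] by (simp add: c_def x_def y_def a_def)
  ultimately show ?thesis
    using to_mat_add_split[of k 2 A] by (simp add: numeral_2_eq_2)
qed

lemma det_to_mat_row_div:
  assumes "k < n" "\<And>j. j < n \<Longrightarrow> d dvd A k j"
  shows "det (to_mat n A) = d * det (to_mat n (\<lambda>i j. if i = k then A i j div d else A i j))"
proof -
  have "to_mat n A = multrow k d (to_mat n (\<lambda>i j. if i = k then A i j div d else A i j))"
    by (rule eq_matI) (use assms in \<open>auto simp: to_mat_def\<close>)
  then show ?thesis by (simp add: det_multrow[OF assms(1) to_mat_carrier])
qed

lemma det_to_mat_transpose: "det (to_mat n (\<lambda>i j. A j i)) = det (to_mat n A)"
proof -
  have "transpose_mat (to_mat n A) = to_mat n (\<lambda>i j. A j i)"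
    by (rule eq_matI) (auto simp: to_mat_def)
  then show ?thesis using det_transpose[OF to_mat_carrier] by metis
qed

lemma det_to_mat_col_div:
  assumes "k < n" "\<And>i. i < n \<Longrightarrow> d dvd A i k"
  shows "det (to_mat n A) = d * det (to_mat n (\<lambda>i j. if j = k then A i j div d else A i j))"
  using det_to_mat_row_div[of k n d "\<lambda>i j. A j i"] assms
  by (simp add: det_to_mat_transpose[of n A, symmetric]
                det_to_mat_transpose[of n "\<lambda>i j. if j = k then A i j div d else A i j", symmetric])

lemma det_to_mat_permute:
  assumes "\<pi> permutes {0..<n}"
  shows "det (to_mat n (\<lambda>i j. A (\<pi> i) (\<pi> j))) = det (to_mat n A)"
proof -
  have permute_rows: "det (to_mat n (\<lambda>i j. B (\<pi> i) j)) = signof \<pi> * det (to_mat n B)" for B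
  proof -
    have "to_mat n (\<lambda>i j. B (\<pi> i) j) = mat n n (\<lambda>(i, j). to_mat n B $$ (\<pi> i, j))"
      using assms by (intro eq_matI) (auto simp: to_mat_def permutes_in_image)
    then show ?thesis using det_permute_rows[OF to_mat_carrier assms] by simp
  qed
  have "det (to_mat n (\<lambda>i j. A (\<pi> i) (\<pi> j))) = signof \<pi> * det (to_mat n (\<lambda>i j. A i (\<pi> j)))"
    using permute_rows[of "\<lambda>i j. A i (\<pi> j)"] by simp
  also have "det (to_mat n (\<lambda>i j. A i (\<pi> j))) = det (to_mat n (\<lambda>i j. A j (\<pi> i)))"
    using det_to_mat_transpose[of n "\<lambda>i j. A j (\<pi> i)"] by simp
  also have "\<dots> = signof \<pi> * det (to_mat n A)"
    using permute_rows[of "\<lambda>i j. A j i"] det_to_mat_transpose[of n A] by simp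
  also have "signof \<pi> * (signof \<pi> * det (to_mat n A)) = det (to_mat n A)"
    using signof_pm_one[of \<pi>] by auto
  finally show ?thesis .
qed

section \<open>Counting nonsingular matrices by bordering\<close>

definition nonsing_count :: "nat \<Rightarrow> nat \<Rightarrow> nat" where
  "nonsing_count n M = card {A \<in> sym_res n M. nonsing_mod M n A}"

lemma bij_betw_sym_space_entrywise:
  assumes "\<And>i j. B i j = B j i" "\<And>i j. f i j = f j i"
    and "\<And>i j. i < n \<Longrightarrow> j < n \<Longrightarrow> bij_betw (f i j) (B i j) (B' i j)"
  shows "bij_betw (\<lambda>A i j. if i < n \<and> j < n then f i j (A i j) else 0) (sym_space n B) (sym_space n B')"
  unfolding bij_betw_def
proof (intro conjI equalityI subsetI)
  show "inj_on (\<lambda>A i j. if i < n \<and> j < n then f i j (A i j) else 0) (sym_space n B)"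
  proof (rule inj_onI, rule ext, rule ext)
    fix A A' i j
    assume A: "A \<in> sym_space n B" "A' \<in> sym_space n B"
      and eq: "(\<lambda>i j. if i < n \<and> j < n then f i j (A i j) else 0) = (\<lambda>i j. if i < n \<and> j < n then f i j (A' i j) else 0)"
    show "A i j = A' i j"
    proof (cases "i < n \<and> j < n")
      case True
      then have "f i j (A i j) = f i j (A' i j)" using fun_cong[OF fun_cong[OF eq, of i], of j] by simp
      then show ?thesis
        using A True assms(3)[of i j] by (auto simp: sym_space_def bij_betw_def inj_on_def)
    qed (use A in \<open>auto simp: sym_space_def\<close>)
  qed
next
  fix A' assume "A' \<in> (\<lambda>A i j. if i < n \<and> j < n then f i j (A i j) else 0) ` sym_space n B"
  then obtain A where A: "A \<in> sym_space n B" "A' = (\<lambda>i j. if i < n \<and> j < n then f i j (A i j) else 0)"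
    by blast
  show "A' \<in> sym_space n B'"
    using A assms(2) by (auto simp: sym_space_def intro: bij_betw_apply[OF assms(3)])
next
  fix A' assume A': "A' \<in> sym_space n B'"
  let ?A = "\<lambda>i j. if i < n \<and> j < n then inv_into (B i j) (f i j) (A' i j) else 0"
  have "?A \<in> sym_space n B"
    using A' assms by (auto simp: sym_space_def bij_betw_def intro: inv_into_into)
  moreover have "A' = (\<lambda>i j. if i < n \<and> j < n then f i j (?A i j) else 0)"
    using A' assms(3) by (auto simp: sym_space_def bij_betw_def fun_eq_iff f_inv_into_f)
  ultimately show "A' \<in> (\<lambda>A i j. if i < n \<and> j < n then f i j (A i j) else 0) ` sym_space n B"
    by (rule rev_image_eqI[where x = ?A])
qed

lemma bij_betw_mod_diff: "0 < M \<Longrightarrow> bij_betw (\<lambda>x. (x - d) mod int M) {0..<int M} {0..<int M}"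
  by (rule bij_betw_byWitness[where f' = "\<lambda>x. (x + d) mod int M"]) (auto simp: mod_simps)

lemma card_nonsing_mod_diff:
  assumes "0 < M" "M' dvd M" "\<And>i j. D i j = D j i"
  shows "card {C \<in> sym_res k M. nonsing_mod M' k (\<lambda>i j. C i j - D i j)} =
         card {C \<in> sym_res k M. nonsing_mod M' k C}"
proof -
  let ?t = "\<lambda>C i j. if i < k \<and> j < k then (C i j - D i j) mod int M else 0"
  have "nonsing_mod M' k (\<lambda>i j. C i j - D i j) \<longleftrightarrow> nonsing_mod M' k (?t C)" for C
    using assms(2) by (intro nonsing_mod_cong) (simp add: cong_def mod_mod_cancel)
  then have "card {C \<in> sym_res k M. nonsing_mod M' k (\<lambda>i j. C i j - D i j)} =
             card {C \<in> sym_res k M. nonsing_mod M' k (?t C)}"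
    by simp
  also have "\<dots> = card {C \<in> sym_res k M. nonsing_mod M' k C}"
    using assms by (intro card_filter_bij_betw bij_betw_sym_space_entrywise bij_betw_mod_diff) auto
  finally show ?thesis .
qed

lemma card_nonsing_mod_sym_res:
  assumes "0 < M'" "M' dvd M"
  shows "card {C \<in> sym_res k M. nonsing_mod M' k C} = (M div M') ^ tri k * nonsing_count k M'"
  using card_sym_res_mod_entries[OF assms, of k "nonsing_mod M' k"]
  by (simp add: nonsing_mod_mod_entries nonsing_count_def)

definition border_count :: "nat \<Rightarrow> nat \<Rightarrow> (nat \<Rightarrow> int) \<Rightarrow> int \<Rightarrow> nat" where
  "border_count M k v a = card {C \<in> sym_res k M. nonsing_mod M (Suc k) (border k C v a)}"

lemma nonsing_count_Suc:
  "nonsing_count (Suc k) M = (\<Sum>(v, a) \<in> res_vecs k M \<times> {0..<int M}. border_count M k v a)"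
  unfolding nonsing_count_def border_count_def by (rule card_sym_space_Suc_filter) auto

lemma border_count_coprime:
  assumes "0 < M" "coprime a (int M)"
  shows "border_count M k v a = nonsing_count k M"
proof -
  obtain b where b: "[a * b = 1] (mod int M)" using cong_solve_coprime_int[OF assms(2)] by blast
  let ?D = "\<lambda>i j. b * v i * v j"
  have "nonsing_mod M (Suc k) (border k C v a) \<longleftrightarrow> nonsing_mod M k (\<lambda>i j. C i j - ?D i j)" for C
  proof (rule nonsing_mod_iff_det_cong_unit[OF _ assms(2)])
    let ?A = "border k C v a"
    have "to_mat k (\<lambda>i j. ?A i j - b * ?A i k * ?A k j) = to_mat k (\<lambda>i j. C i j - ?D i j)"
      by (rule to_mat_cong) (simp add: border_def)
    then show "[det (to_mat (Suc k) ?A) = det (to_mat k (\<lambda>i j. C i j - ?D i j)) * a] (mod int M)"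
      using det_to_mat_pivot_cong[of ?A k b "int M"] b by (simp add: border_def)
  qed
  then have "border_count M k v a = card {C \<in> sym_res k M. nonsing_mod M k (\<lambda>i j. C i j - ?D i j)}"
    unfolding border_count_def by simp
  also have "\<dots> = nonsing_count k M"
    using card_nonsing_mod_diff[OF assms(1) dvd_refl, of ?D k] by (simp add: nonsing_count_def)
  finally show ?thesis .
qed

lemma border_count_permute:
  assumes "\<pi> permutes {0..<k}"
  shows "border_count M k (v \<circ> \<pi>) a = border_count M k v a"
proof -
  let ?P = "\<lambda>\<sigma> C i j. C (\<sigma> i) (\<sigma> j)"
  have P_in: "?P \<sigma> C \<in> sym_res k M" if "C \<in> sym_res k M" "\<sigma> permutes {0..<k}" for C \<sigma>
    using that permutes_in_image[OF that(2)] unfolding sym_space_def by auto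
  \<comment> \<open>Unqualified \<open>inv\<close> denotes group inversion from HOL-Algebra here.\<close>
  have inv_perm: "Hilbert_Choice.inv \<pi> permutes {0..<k}" by (rule permutes_inv[OF assms])
  have "bij_betw (?P \<pi>) (sym_res k M) (sym_res k M)"
  proof (rule bij_betw_byWitness[where f' = "?P (Hilbert_Choice.inv \<pi>)"])
    show "\<forall>C\<in>sym_res k M. ?P (Hilbert_Choice.inv \<pi>) (?P \<pi> C) = C"
      "\<forall>C\<in>sym_res k M. ?P \<pi> (?P (Hilbert_Choice.inv \<pi>) C) = C"
      by (simp_all add: permutes_inverses[OF assms])
    show "?P \<pi> ` sym_res k M \<subseteq> sym_res k M" "?P (Hilbert_Choice.inv \<pi>) ` sym_res k M \<subseteq> sym_res k M"
      using P_in assms inv_perm by auto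
  qed
  then have count_P: "border_count M k (v \<circ> \<pi>) a =
      card {C \<in> sym_res k M. nonsing_mod M (Suc k) (border k (?P \<pi> C) (v \<circ> \<pi>) a)}"
    unfolding border_count_def by (rule card_filter_bij_betw[symmetric])
  have border_P: "border k (?P \<pi> C) (v \<circ> \<pi>) a = ?P \<pi> (border k C v a)" for C
  proof (intro ext)
    fix i j
    have "\<pi> i < k \<longleftrightarrow> i < k" "\<pi> j < k \<longleftrightarrow> j < k"
      using permutes_in_image[OF assms] by auto
    moreover have "\<pi> i = i" if "\<not> i < k" for i
      using permutes_not_in[OF assms] that by simp
    ultimately show "border k (?P \<pi> C) (v \<circ> \<pi>) a i j = ?P \<pi> (border k C v a) i j"
      unfolding border_def by (cases "i < k"; cases "j < k") auto
  qed
  have "nonsing_mod M (Suc k) (?P \<pi> (border k C v a)) \<longleftrightarrow> nonsing_mod M (Suc k) (border k C v a)" for C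
    using det_to_mat_permute[OF permutes_subset[OF assms]] by (simp add: nonsing_mod_def)
  then have "card {C \<in> sym_res k M. nonsing_mod M (Suc k) (border k (?P \<pi> C) (v \<circ> \<pi>) a)} =
      border_count M k v a"
    by (simp add: border_P border_count_def)
  with count_P show ?thesis by simp
qed

text \<open>The count ranges over the diagonal entry c at position k of the inner matrix; the
  hypothesis makes the corner block \<open>[[c, v k], [v k, a]]\<close> invertible modulo M for each of them.\<close>
lemma border_count_pivot2:
  assumes "0 < M" "\<And>c. coprime (c * a - v k * v k) (int M)"
  shows "border_count M (Suc k) v a = M ^ Suc k * nonsing_count k M"
proof -
  have inner: "card {C \<in> sym_res k M. nonsing_mod M (Suc (Suc k)) (border (Suc k) (border k C w c) v a)}
      = nonsing_count k M" for w c
  proof -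
    obtain e where e: "[(c * a - v k * v k) * e = 1] (mod int M)"
      using cong_solve_coprime_int[OF assms(2)] by blast
    let ?D = "\<lambda>i j. e * ((w i * a - v i * v k) * w j + (v i * c - w i * v k) * v j)"
    have "nonsing_mod M (Suc (Suc k)) (border (Suc k) (border k C w c) v a) \<longleftrightarrow>
        nonsing_mod M k (\<lambda>i j. C i j - ?D i j)" for C
    proof (rule nonsing_mod_iff_det_cong_unit[OF _ assms(2)])
      let ?A = "border (Suc k) (border k C w c) v a"
      have corner: "?A k k = c" "?A k (Suc k) = v k" "?A (Suc k) k = v k" "?A (Suc k) (Suc k) = a"
        by (simp_all add: border_def)
      have "?A i j = C i j" "?A i k = w i" "?A k j = w j" "?A i (Suc k) = v i" "?A (Suc k) j = v j"
        if "i < k" "j < k" for i j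
        using that by (simp_all add: border_def)
      then have "to_mat k (\<lambda>i j. ?A i j - e * ((?A i k * a - ?A i (Suc k) * v k) * ?A k j
          + (?A i (Suc k) * c - ?A i k * v k) * ?A (Suc k) j)) = to_mat k (\<lambda>i j. C i j - ?D i j)"
        by (intro to_mat_cong) simp
      then show "[det (to_mat (Suc (Suc k)) ?A) = det (to_mat k (\<lambda>i j. C i j - ?D i j)) * (c * a - v k * v k)]
          (mod int M)"
        using det_to_mat_pivot2_cong[of ?A k e "int M"] e unfolding corner by simp
    qed
    then have "card {C \<in> sym_res k M. nonsing_mod M (Suc (Suc k)) (border (Suc k) (border k C w c) v a)}
        = card {C \<in> sym_res k M. nonsing_mod M k (\<lambda>i j. C i j - ?D i j)}"
      by simp
    also have "\<dots> = nonsing_count k M"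
      using card_nonsing_mod_diff[OF assms(1) dvd_refl, of ?D k] by (simp add: nonsing_count_def algebra_simps)
    finally show ?thesis .
  qed
  have "border_count M (Suc k) v a = (\<Sum>(w, c) \<in> res_vecs k M \<times> {0..<int M}.
      card {C \<in> sym_res k M. nonsing_mod M (Suc (Suc k)) (border (Suc k) (border k C w c) v a)})"
    unfolding border_count_def by (rule card_sym_space_Suc_filter) auto
  also have "\<dots> = M ^ k * M * nonsing_count k M"
    by (simp add: inner card_cartesian_product card_vec_space)
  finally show ?thesis by simp
qed

lemma border_count_row_dvd:
  assumes "M = p * M1" "0 < p" "0 < M1" "\<And>i. i < k \<Longrightarrow> int p dvd v i" "a = int p * u"
    and "coprime u (int M1)"
  shows "border_count M k v a = p ^ tri k * nonsing_count k M1"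
proof -
  obtain b where b: "[u * b = 1] (mod int M1)" using cong_solve_coprime_int[OF assms(6)] by blast
  let ?D = "\<lambda>i j. b * int p * (v i div int p) * (v j div int p)"
  have "nonsing_mod M (Suc k) (border k C v a) \<longleftrightarrow> nonsing_mod M1 k (\<lambda>i j. C i j - ?D i j)" for C
  proof -
    let ?A = "border k C v a"
    let ?A1 = "\<lambda>i j. if i = k then ?A i j div int p else ?A i j"
    have "det (to_mat (Suc k) ?A) = int p * det (to_mat (Suc k) ?A1)"
      by (rule det_to_mat_row_div) (use assms(4,5) in \<open>auto simp: border_last_row\<close>)
    then have "nonsing_mod M (Suc k) ?A \<longleftrightarrow> nonsing_mod M1 (Suc k) ?A1"
      using assms(1,2) by (simp add: nonsing_mod_def)
    also have "\<dots> \<longleftrightarrow> nonsing_mod M1 k (\<lambda>i j. C i j - ?D i j)"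
    proof (rule nonsing_mod_iff_det_cong_unit[OF _ assms(6)])
      have "?A1 i j = C i j" "?A1 i k = int p * (v i div int p)" "?A1 k j = v j div int p"
        if "i < k" "j < k" for i j
        using that assms(4)[OF that(1)] by (simp_all add: border_def)
      then have "to_mat k (\<lambda>i j. ?A1 i j - b * ?A1 i k * ?A1 k j) = to_mat k (\<lambda>i j. C i j - ?D i j)"
        by (intro to_mat_cong) (simp add: ac_simps)
      moreover have "?A1 k k = u" using assms(2,5) by (simp add: border_def)
      ultimately show "[det (to_mat (Suc k) ?A1) = det (to_mat k (\<lambda>i j. C i j - ?D i j)) * u] (mod int M1)"
        using det_to_mat_pivot_cong[of ?A1 k b "int M1"] b by simp
    qed
    finally show ?thesis .
  qed
  then have "border_count M k v a = card {C \<in> sym_res k M. nonsing_mod M1 k (\<lambda>i j. C i j - ?D i j)}"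
    unfolding border_count_def by simp
  also have "\<dots> = card {C \<in> sym_res k M. nonsing_mod M1 k C}"
    using assms(1-3) by (intro card_nonsing_mod_diff) auto
  also have "\<dots> = p ^ tri k * nonsing_count k M1"
    using card_nonsing_mod_sym_res[of M1 M k] assms(1,3) by simp
  finally show ?thesis .
qed

lemma border_count_eq_0:
  assumes "M dvd p" "\<And>i. i < k \<Longrightarrow> int p dvd v i" "int p dvd a"
  shows "border_count M k v a = 0"
proof -
  have "\<not> nonsing_mod M (Suc k) (border k C v a)" for C
  proof -
    have "det (to_mat (Suc k) (border k C v a)) =
        int p * det (to_mat (Suc k) (\<lambda>i j. if i = k then border k C v a i j div int p else border k C v a i j))"
      by (rule det_to_mat_row_div) (use assms(2,3) in \<open>auto simp: border_last_row\<close>)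
    moreover have "int M dvd int p" using assms(1) by simp
    ultimately show ?thesis unfolding nonsing_mod_def by (simp add: dvd_mult2)
  qed
  then show ?thesis by (simp add: border_count_def)
qed

lemma det_border_div:
  fixes d :: int
  assumes "0 \<le> d" "\<And>i. i < k \<Longrightarrow> d dvd v i" "d * d dvd a"
  shows "det (to_mat (Suc k) (border k C v a)) =
    d * d * det (to_mat (Suc k) (border k C (\<lambda>i. v i div d) (a div (d * d))))"
proof -
  let ?A = "border k C v a"
  let ?A1 = "\<lambda>i j. if i = k then ?A i j div d else ?A i j"
  let ?A2 = "\<lambda>i j. if j = k then ?A1 i j div d else ?A1 i j"
  have "d dvd a" using assms(3) by (rule dvd_mult_left)
  have "d dvd a div d"
    using assms(3) by (cases "d = 0") auto
  have "det (to_mat (Suc k) ?A) = d * det (to_mat (Suc k) ?A1)"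
    by (rule det_to_mat_row_div) (use assms(2) \<open>d dvd a\<close> in \<open>auto simp: border_last_row\<close>)
  also have "det (to_mat (Suc k) ?A1) = d * det (to_mat (Suc k) ?A2)"
  proof (rule det_to_mat_col_div)
    fix i assume "i < Suc k"
    then show "d dvd ?A1 i k"
      using assms(2) \<open>d dvd a div d\<close> by (cases "i = k") (auto simp: border_def)
  qed simp
  also have "to_mat (Suc k) ?A2 = to_mat (Suc k) (border k C (\<lambda>i. v i div d) (a div (d * d)))"
  proof (rule to_mat_cong)
    fix i j assume "i < Suc k" "j < Suc k"
    then show "?A2 i j = border k C (\<lambda>i. v i div d) (a div (d * d)) i j"
      using zdiv_zmult2_eq[OF assms(1), of a d]
      by (cases "i = k"; cases "j = k") (auto simp: border_def)
  qed
  finally show ?thesis by simp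
qed

lemma border_count_border_dvd:
  assumes "M = p\<^sup>2 * M2" "0 < p" "0 < M2" "\<And>i. i < k \<Longrightarrow> int p dvd v i" "int p ^ 2 dvd a"
  shows "border_count M k v a =
    (p\<^sup>2) ^ tri k * border_count M2 k (\<lambda>i. (v i div int p) mod int M2) ((a div int p ^ 2) mod int M2)"
proof -
  let ?v = "\<lambda>i. (v i div int p) mod int M2" and ?a = "(a div int p ^ 2) mod int M2"
  have "nonsing_mod M (Suc k) (border k C v a) \<longleftrightarrow>
      nonsing_mod M2 (Suc k) (border k (mod_entries M2 C) ?v ?a)" for C
  proof -
    have "nonsing_mod M (Suc k) (border k C v a) \<longleftrightarrow>
        nonsing_mod M2 (Suc k) (border k C (\<lambda>i. v i div int p) (a div int p ^ 2))"
      using det_border_div[of "int p" k v a C] assms by (simp add: nonsing_mod_def power2_eq_square)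
    also have "\<dots> \<longleftrightarrow> nonsing_mod M2 (Suc k) (border k (mod_entries M2 C) ?v ?a)"
      by (rule nonsing_mod_cong) (simp add: border_def mod_entries_def cong_def)
    finally show ?thesis .
  qed
  then have "border_count M k v a =
      card {C \<in> sym_res k M. nonsing_mod M2 (Suc k) (border k (mod_entries M2 C) ?v ?a)}"
    unfolding border_count_def by simp
  also have "\<dots> = (M div M2) ^ tri k * border_count M2 k ?v ?a"
    unfolding border_count_def using assms(1,3) by (intro card_sym_res_mod_entries) auto
  finally show ?thesis using assms(1,3) by simp
qed

section \<open>The recurrence\<close>

definition res_multiples :: "nat \<Rightarrow> nat \<Rightarrow> int set" where
  "res_multiples d M = {x \<in> {0..<int M}. int d dvd x}"

lemma finite_res_multiples: "finite (res_multiples d M)"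
  by (rule finite_subset[of _ "{0..<int M}"]) (auto simp: res_multiples_def)

lemma card_res_multiples: "0 < d \<Longrightarrow> d dvd M \<Longrightarrow> card (res_multiples d M) = M div d"
  using card_mod_eq_atLeastLessThan[of d M 0] by (simp add: res_multiples_def dvd_eq_mod_eq_0)

lemma card_res_multiples_div_mod:
  assumes "0 < d" "0 < M'" "M' dvd N" "0 \<le> r" "r < int M'"
  shows "card {x \<in> res_multiples d (d * N). (x div int d) mod int M' = r} = N div M'"
proof -
  have "{x \<in> res_multiples d (d * N). (x div int d) mod int M' = r} =
      (\<lambda>y. int d * y) ` {y \<in> {0..<int N}. y mod int M' = r}"
  proof (intro equalityI subsetI)
    fix x assume x: "x \<in> {x \<in> res_multiples d (d * N). (x div int d) mod int M' = r}"
    then obtain y where "x = int d * y" by (auto simp: res_multiples_def)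
    with x assms(1) show "x \<in> (\<lambda>y. int d * y) ` {y \<in> {0..<int N}. y mod int M' = r}"
      by (auto simp: res_multiples_def zero_le_mult_iff)
  qed (use assms(1) in \<open>auto simp: res_multiples_def\<close>)
  moreover have "inj_on (\<lambda>y. int d * y) {y \<in> {0..<int N}. y mod int M' = r}"
    using assms(1) by (auto simp: inj_on_def)
  ultimately show ?thesis
    using card_mod_eq_atLeastLessThan[OF assms(2-5)] by (simp add: card_image)
qed

lemma coprime_prime_power_iff:
  assumes "prime p" "0 < m"
  shows "coprime x (int (p ^ m)) \<longleftrightarrow> \<not> int p dvd x"
proof -
  have "prime (int p)" using assms(1) by simp
  then have "coprime x (int p) \<longleftrightarrow> \<not> int p dvd x"
    by (metis coprime_absorb_right coprime_commute not_prime_unit prime_imp_coprime)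
  then show ?thesis using assms(2) by simp
qed

lemma card_res_multiples_diff:
  assumes "0 < d" "0 < e" "d dvd e" "e dvd M"
  shows "card (res_multiples d M - res_multiples e M) = M div d - M div e"
proof -
  have "res_multiples e M \<subseteq> res_multiples d M"
    using assms(3) by (auto simp: res_multiples_def intro: dvd_trans)
  then have "card (res_multiples d M - res_multiples e M) = card (res_multiples d M) - card (res_multiples e M)"
    by (intro card_Diff_subset finite_res_multiples)
  then show ?thesis
    using card_res_multiples[OF assms(1) dvd_trans[OF assms(3,4)]] card_res_multiples[OF assms(2,4)] by simp
qed

lemma sum_border_count_corner_coprime:
  assumes "prime p" "M = p ^ m" "0 < m"
  shows "(\<Sum>(v, a) \<in> res_vecs k M \<times> ({0..<int M} - res_multiples p M). border_count M k v a) =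
    M ^ k * (M - M div p) * nonsing_count k M"
proof -
  have "0 < p" using assms(1) by (simp add: prime_gt_0_nat)
  have "p dvd M" using assms(2,3) by (simp add: dvd_power)
  have "coprime a (int M)" if "a \<in> {0..<int M} - res_multiples p M" for a
    using that coprime_prime_power_iff[OF assms(1,3), of a] assms(2) by (simp add: res_multiples_def)
  moreover have "0 < M" using assms(2) \<open>0 < p\<close> by simp
  ultimately have "border_count M k v a = nonsing_count k M" if "a \<in> {0..<int M} - res_multiples p M" for v a
    using that border_count_coprime by blast
  then have "(\<Sum>(v, a) \<in> res_vecs k M \<times> ({0..<int M} - res_multiples p M). border_count M k v a) =
      (\<Sum>_ \<in> res_vecs k M \<times> ({0..<int M} - res_multiples p M). nonsing_count k M)"
    by (intro sum.cong) auto
  moreover have "card ({0..<int M} - res_multiples p M) = M - M div p"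
  proof -
    have "{0..<int M} = res_multiples 1 M" by (auto simp: res_multiples_def)
    then show ?thesis using card_res_multiples_diff[of 1 p M] \<open>0 < p\<close> \<open>p dvd M\<close> by simp
  qed
  ultimately show ?thesis by (simp add: card_cartesian_product card_vec_space)
qed

lemma sum_border_count_column_coprime:
  assumes "prime p" "M = p ^ m" "0 < m"
  shows "(\<Sum>(v, a) \<in> (res_vecs k M - vec_space k (\<lambda>_. res_multiples p M)) \<times> res_multiples p M.
      border_count M k v a) = (M ^ k - (M div p) ^ k) * (M div p) * (M ^ k * nonsing_count (k - 1) M)"
proof -
  let ?V = "vec_space k (\<lambda>_. res_multiples p M)"
  have "0 < p" using assms(1) by (simp add: prime_gt_0_nat)
  have "p dvd M" using assms(2,3) by (simp add: dvd_power)
  have "?V \<subseteq> res_vecs k M" by (auto simp: vec_space_def res_multiples_def)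
  then have card_V: "card (res_vecs k M - ?V) = M ^ k - (M div p) ^ k"
    using \<open>0 < p\<close> \<open>p dvd M\<close>
    by (subst card_Diff_subset) (auto intro: finite_subset simp: finite_vec_space card_vec_space card_res_multiples)
  have "border_count M k v a = M ^ k * nonsing_count (k - 1) M"
    if v: "v \<in> res_vecs k M - ?V" and a: "a \<in> res_multiples p M" for v a
  proof -
    obtain j where j: "j < k" "\<not> int p dvd v j" using v by (auto simp: vec_space_def res_multiples_def)
    then obtain k' where k: "k = Suc k'" by (cases k) auto
    let ?\<pi> = "Transposition.transpose j k'"
    have perm: "?\<pi> permutes {0..<k}" using j k by (intro permutes_swap_id) auto
    have "border_count M k v a = border_count M (Suc k') (v \<circ> ?\<pi>) a"
      using border_count_permute[OF perm, of M v a] k by simp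
    also have "\<dots> = M ^ Suc k' * nonsing_count k' M"
    proof (rule border_count_pivot2)
      show "0 < M" using assms(2) \<open>0 < p\<close> by simp
    next
      fix c
      have "prime (int p)" using assms(1) by simp
      have "int p dvd c * a" using a by (simp add: res_multiples_def)
      moreover have "\<not> int p dvd v j * v j" using j(2) \<open>prime (int p)\<close> by (simp add: prime_dvd_mult_iff)
      ultimately have "\<not> int p dvd c * a - v j * v j"
        using dvd_diff[of "int p" "c * a" "c * a - v j * v j"] by auto
      then show "coprime (c * a - (v \<circ> ?\<pi>) k' * (v \<circ> ?\<pi>) k') (int M)"
        using coprime_prime_power_iff[OF assms(1,3)] assms(2) by simp
    qed
    finally show ?thesis using k by simp
  qed
  then have "(\<Sum>(v, a) \<in> (res_vecs k M - ?V) \<times> res_multiples p M. border_count M k v a) =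
      (\<Sum>_ \<in> (res_vecs k M - ?V) \<times> res_multiples p M. M ^ k * nonsing_count (k - 1) M)"
    by (intro sum.cong) auto
  then show ?thesis
    using card_V card_res_multiples[OF \<open>0 < p\<close> \<open>p dvd M\<close>] by (simp add: card_cartesian_product)
qed

lemma sum_border_count_corner_p_exact:
  assumes "prime p" "M = p ^ m" "2 \<le> m"
  shows "(\<Sum>(v, a) \<in> vec_space k (\<lambda>_. res_multiples p M) \<times> (res_multiples p M - res_multiples (p\<^sup>2) M).
      border_count M k v a) = (M div p) ^ k * (M div p - M div p\<^sup>2) * (p ^ tri k * nonsing_count k (M div p))"
proof -
  let ?V = "vec_space k (\<lambda>_. res_multiples p M)"
  let ?A = "res_multiples p M - res_multiples (p\<^sup>2) M"
  have "0 < p" using assms(1) by (simp add: prime_gt_0_nat)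
  have M_div_p: "M div p = p ^ (m - 1)" using assms(2,3) \<open>0 < p\<close> by (simp add: power_diff)
  have "p dvd M" "p\<^sup>2 dvd M" using assms(2,3) by (simp_all add: le_imp_power_dvd dvd_power)
  have "border_count M k v a = p ^ tri k * nonsing_count k (M div p)" if "v \<in> ?V" "a \<in> ?A" for v a
  proof (rule border_count_row_dvd)
    show "M = p * (M div p)" "0 < p" "0 < M div p" "a = int p * (a div int p)"
      using that \<open>p dvd M\<close> \<open>0 < p\<close> M_div_p by (auto simp: res_multiples_def)
    show "int p dvd v i" if "i < k" for i
      using \<open>v \<in> ?V\<close> that by (auto simp: vec_space_def res_multiples_def)
    have "\<not> int p dvd a div int p"
      using that by (auto simp: res_multiples_def power2_eq_square dvd_div_iff_mult)
    then show "coprime (a div int p) (int (M div p))"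
      using coprime_prime_power_iff[OF assms(1), of "m - 1"] assms(3) M_div_p by simp
  qed
  then have "(\<Sum>(v, a) \<in> ?V \<times> ?A. border_count M k v a) = (\<Sum>_ \<in> ?V \<times> ?A. p ^ tri k * nonsing_count k (M div p))"
    by (intro sum.cong) auto
  moreover have "card ?A = M div p - M div p\<^sup>2"
    using \<open>0 < p\<close> \<open>p\<^sup>2 dvd M\<close> by (intro card_res_multiples_diff) (auto simp: power2_eq_square)
  ultimately show ?thesis
    using \<open>0 < p\<close> \<open>p dvd M\<close> by (simp add: card_cartesian_product card_vec_space card_res_multiples)
qed

definition border_reduce :: "nat \<Rightarrow> nat \<Rightarrow> (nat \<Rightarrow> int) \<times> int \<Rightarrow> (nat \<Rightarrow> int) \<times> int" where
  "border_reduce p M2 = (\<lambda>(v, a). (\<lambda>i. (v i div int p) mod int M2, (a div int p ^ 2) mod int M2))"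

lemma card_border_reduce_fiber:
  assumes "0 < p" "0 < M2" "M = p\<^sup>2 * M2" "w \<in> res_vecs k M2" "0 \<le> t" "t < int M2"
  shows "card {x \<in> vec_space k (\<lambda>_. res_multiples p M) \<times> res_multiples (p\<^sup>2) M.
    border_reduce p M2 x = (w, t)} = p ^ k"
proof -
  let ?V = "vec_space k (\<lambda>_. res_multiples p M)"
  have "(\<lambda>i. (v i div int p) mod int M2) = w \<longleftrightarrow> (\<forall>i<k. (v i div int p) mod int M2 = w i)"
    if "v \<in> ?V" for v
  proof (intro iffI ext)
    fix i assume "\<forall>i<k. (v i div int p) mod int M2 = w i"
    then show "(v i div int p) mod int M2 = w i"
      using that assms(4) by (cases "i < k") (auto simp: vec_space_def)
  qed auto
  then have "{x \<in> ?V \<times> res_multiples (p\<^sup>2) M. border_reduce p M2 x = (w, t)} =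
      vec_space k (\<lambda>i. {x \<in> res_multiples p M. (x div int p) mod int M2 = w i})
      \<times> {x \<in> res_multiples (p\<^sup>2) M. (x div int p ^ 2) mod int M2 = t}"
    by (auto simp: border_reduce_def vec_space_def)
  moreover have "card {x \<in> res_multiples p M. (x div int p) mod int M2 = w i} = p" if "i < k" for i
    using assms that card_res_multiples_div_mod[of p M2 "p * M2" "w i"]
    by (simp add: vec_space_def power2_eq_square mult.assoc)
  moreover have "card {x \<in> res_multiples (p\<^sup>2) M. (x div int p ^ 2) mod int M2 = t} = 1"
    using assms card_res_multiples_div_mod[of "p\<^sup>2" M2 M2 t] by simp
  ultimately show ?thesis by (simp add: card_cartesian_product card_vec_space)
qed

lemma sum_border_count_corner_p2:
  assumes "prime p" "M = p ^ m" "2 \<le> m"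
  shows "(\<Sum>(v, a) \<in> vec_space k (\<lambda>_. res_multiples p M) \<times> res_multiples (p\<^sup>2) M. border_count M k v a) =
    (p\<^sup>2) ^ tri k * p ^ k * nonsing_count (Suc k) (M div p\<^sup>2)"
proof -
  define M2 where "M2 = M div p\<^sup>2"
  let ?X = "vec_space k (\<lambda>_. res_multiples p M) \<times> res_multiples (p\<^sup>2) M"
  let ?Y = "res_vecs k M2 \<times> {0..<int M2}"
  define h where "h = (\<lambda>(w, t). border_count M2 k w t)"
  have "0 < p" using assms(1) by (simp add: prime_gt_0_nat)
  have "p\<^sup>2 dvd M" using assms(2,3) by (simp add: le_imp_power_dvd)
  then have M: "M = p\<^sup>2 * M2" by (simp add: M2_def)
  have "0 < M2" using M assms(2) \<open>0 < p\<close> by (metis nat_0_less_mult_iff zero_less_power)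
  have "border_count M k v a = (p\<^sup>2) ^ tri k * h (border_reduce p M2 (v, a))" if "(v, a) \<in> ?X" for v a
  proof -
    have "border_count M k v a =
        (p\<^sup>2) ^ tri k * border_count M2 k (\<lambda>i. (v i div int p) mod int M2) ((a div int p ^ 2) mod int M2)"
      using that M \<open>0 < p\<close> \<open>0 < M2\<close>
      by (intro border_count_border_dvd) (auto simp: vec_space_def res_multiples_def)
    then show ?thesis by (simp add: h_def border_reduce_def)
  qed
  then have "(\<Sum>(v, a) \<in> ?X. border_count M k v a) = (\<Sum>x \<in> ?X. (p\<^sup>2) ^ tri k * h (border_reduce p M2 x))"
    by (intro sum.cong) auto
  also have "\<dots> = (p\<^sup>2) ^ tri k * (\<Sum>x \<in> ?X. h (border_reduce p M2 x))"
    by (simp add: sum_distrib_left)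
  also have "(\<Sum>x \<in> ?X. h (border_reduce p M2 x)) = of_nat (p ^ k) * (\<Sum>y \<in> ?Y. h y)"
  proof (rule sum_comp_fibers_const)
    show "finite ?X" "finite ?Y" by (auto intro!: finite_vec_space simp: finite_res_multiples)
    show "border_reduce p M2 ` ?X \<subseteq> ?Y"
      using \<open>0 < M2\<close> by (auto simp: border_reduce_def vec_space_def)
  qed (use card_border_reduce_fiber[OF \<open>0 < p\<close> \<open>0 < M2\<close> M] in auto)
  also have "(\<Sum>y \<in> ?Y. h y) = nonsing_count (Suc k) M2"
    by (simp add: nonsing_count_Suc h_def)
  finally show ?thesis by (simp add: M2_def)
qed

lemma sum_Times_diff_right:
  assumes "finite A" "finite B" "B' \<subseteq> B"
  shows "sum f (A \<times> B) = sum f (A \<times> (B - B')) + sum f (A \<times> B')"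
proof -
  have "A \<times> B - A \<times> B' = A \<times> (B - B')" by auto
  then show ?thesis using sum.subset_diff[of "A \<times> B'" "A \<times> B" f] assms by auto
qed

lemma sum_Times_diff_left:
  assumes "finite A" "finite B" "A' \<subseteq> A"
  shows "sum f (A \<times> B) = sum f ((A - A') \<times> B) + sum f (A' \<times> B)"
proof -
  have "A \<times> B - A' \<times> B = (A - A') \<times> B" by auto
  then show ?thesis using sum.subset_diff[of "A' \<times> B" "A \<times> B" f] assms by auto
qed

lemma nonsing_count_Suc_prime_power:
  assumes "prime p" "M = p ^ m" "0 < m"
  shows "nonsing_count (Suc k) M =
      M ^ k * (M - M div p) * nonsing_count k M
    + (M ^ k - (M div p) ^ k) * (M div p) * (M ^ k * nonsing_count (k - 1) M)
    + (if m = 1 then 0 else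
        (M div p) ^ k * (M div p - M div p\<^sup>2) * (p ^ tri k * nonsing_count k (M div p))
      + (p\<^sup>2) ^ tri k * p ^ k * nonsing_count (Suc k) (M div p\<^sup>2))"
proof -
  let ?f = "\<lambda>(v, a). border_count M k v a"
  let ?R = "res_vecs k M" and ?P = "res_multiples p M" and ?P2 = "res_multiples (p\<^sup>2) M"
  let ?V = "vec_space k (\<lambda>_. ?P)"
  have fin: "finite ?R" "finite ?V" "finite ?P" "finite {0..<int M}"
    by (simp_all add: finite_vec_space finite_res_multiples)
  have sub: "?P \<subseteq> {0..<int M}" "?V \<subseteq> ?R" "?P2 \<subseteq> ?P"
    by (auto simp: res_multiples_def vec_space_def power2_eq_square intro: dvd_mult_left)
  have "nonsing_count (Suc k) M = sum ?f (?R \<times> {0..<int M})"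
    by (rule nonsing_count_Suc)
  also have "\<dots> = sum ?f (?R \<times> ({0..<int M} - ?P)) + sum ?f ((?R - ?V) \<times> ?P) + sum ?f (?V \<times> ?P)"
    using sum_Times_diff_right[OF fin(1,4) sub(1), where f = ?f] sum_Times_diff_left[OF fin(1,3) sub(2), where f = ?f]
    by (simp add: add.assoc)
  also have "sum ?f (?V \<times> ?P) = (if m = 1 then 0 else sum ?f (?V \<times> (?P - ?P2)) + sum ?f (?V \<times> ?P2))"
  proof (cases "m = 1")
    case True
    then have "?f y = 0" if "y \<in> ?V \<times> ?P" for y
      using that assms(2) by (auto intro!: border_count_eq_0[where p = p] simp: vec_space_def res_multiples_def)
    then show ?thesis using True by simp
  next
    case False
    then show ?thesis using sum_Times_diff_right[OF fin(2,3) sub(3), where f = ?f] by simp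
  qed
  finally show ?thesis
    using assms sum_border_count_corner_coprime sum_border_count_column_coprime
      sum_border_count_corner_p_exact sum_border_count_corner_p2 by simp
qed

definition nonsing_density :: "nat \<Rightarrow> nat \<Rightarrow> real" where
  "nonsing_density n M = real (nonsing_count n M) / real M ^ tri n"

lemma real_power_tri_Suc: "real M ^ tri (Suc k) = real M ^ tri k * real M ^ k * real M"
  by (simp add: power_add)

lemma density_term_corner_coprime:
  assumes "0 < p" "p dvd M" "0 < M" "q = 1 / real p"
  shows "real (M ^ k * (M - M div p) * c) / real M ^ tri (Suc k) = (1 - q) * (real c / real M ^ tri k)"
proof -
  have "real (M - M div p) = real M - real M / real p"
    using assms(2) by (simp add: of_nat_diff div_le_dividend real_of_nat_div)
  then have num: "real (M ^ k * (M - M div p) * c) = real M ^ k * (real M - real M / real p) * real c"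
    by simp
  show ?thesis unfolding real_power_tri_Suc num using assms(1,3) by (simp add: assms(4) field_simps)
qed

lemma density_term_column_coprime:
  assumes "0 < p" "p dvd M" "0 < M" "q = 1 / real p"
  shows "real ((M ^ k - (M div p) ^ k) * (M div p) * (M ^ k * c)) / real M ^ tri (Suc k) =
    q * (1 - q ^ k) * (real c / real M ^ tri (k - 1))"
proof (cases "k = 0")
  case False
  then have tri: "tri k = tri (k - 1) + k" by (cases k) auto
  have div: "real (M div p) = real M / real p" using assms(2) by (simp add: real_of_nat_div)
  then have "real (M ^ k - (M div p) ^ k) = real M ^ k - (real M / real p) ^ k"
    by (simp add: of_nat_diff power_mono div_le_dividend)
  then have num: "real ((M ^ k - (M div p) ^ k) * (M div p) * (M ^ k * c)) =
      (real M ^ k - (real M / real p) ^ k) * (real M / real p) * (real M ^ k * real c)"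
    using div by simp
  show ?thesis
    unfolding real_power_tri_Suc tri num using assms(1,3) by (simp add: assms(4) field_simps power_add power_divide)
qed simp

lemma density_term_corner_p_exact:
  assumes "0 < p" "p\<^sup>2 dvd M" "0 < M" "q = 1 / real p"
  shows "real ((M div p) ^ k * (M div p - M div p\<^sup>2) * (p ^ tri k * c)) / real M ^ tri (Suc k) =
    q ^ Suc k * (1 - q) * (real c / real (M div p) ^ tri k)"
proof -
  have "p dvd M" using assms(2) by (simp add: power2_eq_square dvd_mult_left)
  then have div: "real (M div p) = real M / real p" "real (M div p\<^sup>2) = real M / real p ^ 2"
    using assms(2) by (simp_all add: real_of_nat_div)
  moreover have "M div p\<^sup>2 \<le> M div p" using assms(1) by (intro div_le_mono2) (auto simp: power2_eq_square)
  ultimately have "real (M div p - M div p\<^sup>2) = real M / real p - real M / real p ^ 2"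
    by (simp add: of_nat_diff)
  then have num: "real ((M div p) ^ k * (M div p - M div p\<^sup>2) * (p ^ tri k * c)) =
      (real M / real p) ^ k * (real M / real p - real M / real p ^ 2) * (real p ^ tri k * real c)"
    using div by simp
  show ?thesis
    unfolding real_power_tri_Suc num div using assms(1,3)
    by (simp add: assms(4) field_simps power_add power_divide power2_eq_square)
qed

lemma density_term_corner_p2:
  assumes "0 < p" "p\<^sup>2 dvd M" "0 < M" "q = 1 / real p"
  shows "real ((p\<^sup>2) ^ tri k * p ^ k * c) / real M ^ tri (Suc k) =
    q ^ (k + 2) * (real c / real (M div p\<^sup>2) ^ tri (Suc k))"
proof -
  have div: "real (M div p\<^sup>2) = real M / real p ^ 2" using assms(2) by (simp add: real_of_nat_div)
  have num: "real ((p\<^sup>2) ^ tri k * p ^ k * c) = (real p ^ 2) ^ tri k * real p ^ k * real c" by simp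
  show ?thesis
    unfolding real_power_tri_Suc num div using assms(1,3)
    by (simp add: assms(4) field_simps power_add power_divide power_mult_distrib
        power2_eq_square mult_2_right flip: power_mult)
qed

lemma nonsing_density_Suc_prime_power:
  assumes "prime p" "M = p ^ m" "0 < m" "q = 1 / real p"
  shows "nonsing_density (Suc k) M =
      (1 - q) * nonsing_density k M
    + q * (1 - q ^ k) * nonsing_density (k - 1) M
    + (if m = 1 then 0 else
        q ^ Suc k * (1 - q) * nonsing_density k (M div p)
      + q ^ (k + 2) * nonsing_density (Suc k) (M div p\<^sup>2))"
proof -
  have "0 < p" using assms(1) by (simp add: prime_gt_0_nat)
  then have "0 < M" "p dvd M" using assms(2,3) by (simp_all add: dvd_power)
  let ?D = "real M ^ tri (Suc k)"
  have "nonsing_density (Suc k) M =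
      real (M ^ k * (M - M div p) * nonsing_count k M) / ?D
    + real ((M ^ k - (M div p) ^ k) * (M div p) * (M ^ k * nonsing_count (k - 1) M)) / ?D
    + real (if m = 1 then 0 else
        (M div p) ^ k * (M div p - M div p\<^sup>2) * (p ^ tri k * nonsing_count k (M div p))
      + (p\<^sup>2) ^ tri k * p ^ k * nonsing_count (Suc k) (M div p\<^sup>2)) / ?D"
    unfolding nonsing_density_def nonsing_count_Suc_prime_power[OF assms(1-3)]
    by (simp only: of_nat_add add_divide_distrib)
  also have "real (if m = 1 then 0 else
        (M div p) ^ k * (M div p - M div p\<^sup>2) * (p ^ tri k * nonsing_count k (M div p))
      + (p\<^sup>2) ^ tri k * p ^ k * nonsing_count (Suc k) (M div p\<^sup>2)) / ?D =
      (if m = 1 then 0 else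
        q ^ Suc k * (1 - q) * nonsing_density k (M div p)
      + q ^ (k + 2) * nonsing_density (Suc k) (M div p\<^sup>2))"
  proof (cases "m = 1")
    case False
    then have "p\<^sup>2 dvd M" using assms(2,3) by (simp add: le_imp_power_dvd)
    note terms = density_term_corner_p_exact[OF \<open>0 < p\<close> this \<open>0 < M\<close> assms(4)]
      density_term_corner_p2[OF \<open>0 < p\<close> this \<open>0 < M\<close> assms(4)]
    show ?thesis
      unfolding if_not_P[OF False] of_nat_add add_divide_distrib terms by (simp add: nonsing_density_def)
  qed simp
  finally show ?thesis
    unfolding density_term_corner_coprime[OF \<open>0 < p\<close> \<open>p dvd M\<close> \<open>0 < M\<close> assms(4)]
      density_term_column_coprime[OF \<open>0 < p\<close> \<open>p dvd M\<close> \<open>0 < M\<close> assms(4)]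
    by (simp add: nonsing_density_def)
qed

lemma bij_betw_mod_atLeastAtMost: "0 < M \<Longrightarrow> bij_betw (\<lambda>x. x mod int M) {1..int M} {0..<int M}"
proof (rule bij_betw_byWitness[where f' = "\<lambda>x. if x = 0 then int M else x"])
  have "x mod int M = (if x = int M then 0 else x)" if "x \<in> {1..int M}" for x
    using that by auto
  then show "\<forall>x\<in>{1..int M}. (if x mod int M = 0 then int M else x mod int M) = x"
    "(\<lambda>x. x mod int M) ` {1..int M} \<subseteq> {0..<int M}"
    by auto
qed auto

lemma P_nonsing_eq_nonsing_density:
  assumes "0 < M"
  shows "P_nonsing n M = nonsing_density n M"
proof -
  let ?r = "\<lambda>A i j. if i < n \<and> j < n then A i j mod int M else 0"
  have sym_mats: "sym_mats n M = sym_space n (\<lambda>_ _. {1..int M})"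
    by (simp add: sym_mats_def sym_space_def)
  have card_sym_mats: "card (sym_mats n M) = M ^ tri n"
    unfolding sym_mats by (rule card_sym_space) auto
  have "\<not> int M dvd det (to_mat n A) \<longleftrightarrow> nonsing_mod M n (?r A)" for A
    unfolding nonsing_mod_def[symmetric] by (rule nonsing_mod_cong) (simp add: cong_def)
  then have "card {A \<in> sym_mats n M. \<not> int M dvd det (to_mat n A)} =
      card {A \<in> sym_mats n M. nonsing_mod M n (?r A)}"
    by simp
  also have "\<dots> = nonsing_count n M"
    unfolding nonsing_count_def sym_mats using assms
    by (intro card_filter_bij_betw bij_betw_sym_space_entrywise bij_betw_mod_atLeastAtMost) auto
  finally show ?thesis by (simp add: P_nonsing_def nonsing_density_def card_sym_mats)
qed

lemma Pb_eq_nonsing_density: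
  assumes "prime p" "0 < n \<or> 0 < m"
  shows "Pb p n (int m) = nonsing_density n (p ^ m)"
proof -
  have "1 < p" using prime_gt_1_nat[OF assms(1)] by simp
  consider "m = 0" "0 < n" | "0 < m" "n = 0" | "0 < m" "0 < n" using assms(2) by auto
  then show ?thesis
  proof cases
    case 1
    then show ?thesis by (simp add: Pb_def nonsing_density_def nonsing_count_def nonsing_mod_def)
  next
    case 2
    have "\<not> int (p ^ m) dvd 1"
      using 2(1) \<open>1 < p\<close> zdvd_imp_le[of "int (p ^ m)" 1] by (auto simp del: of_nat_power)
    then show ?thesis
      using 2 by (simp add: Pb_def nonsing_density_def nonsing_count_def nonsing_mod_def to_mat_def sym_space_0)
  next
    case 3
    then show ?thesis using \<open>1 < p\<close> by (simp add: Pb_def P_nonsing_eq_nonsing_density)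
  qed
qed

lemma Pb_lower_exponents:
  assumes "prime p" "0 < m"
  shows "Pb p k (int m - 1) = (if m = 1 then 0 else nonsing_density k (p ^ m div p))"
    and "Pb p (Suc k) (int m - 2) = (if m = 1 then 0 else nonsing_density (Suc k) (p ^ m div p\<^sup>2))"
proof -
  let ?A = "Pb p k (int m - 1) = (if m = 1 then 0 else nonsing_density k (p ^ m div p))"
  let ?B = "Pb p (Suc k) (int m - 2) = (if m = 1 then 0 else nonsing_density (Suc k) (p ^ m div p\<^sup>2))"
  have "?A \<and> ?B"
  proof (cases "m = 1")
    case False
    then obtain m' where m': "m = 2 + m'" using assms(2) le_Suc_ex[of 2 m] by auto
    have "0 < p" using assms(1) by (simp add: prime_gt_0_nat)
    then have M_div: "p ^ m div p = p ^ Suc m'" "p ^ m div p\<^sup>2 = p ^ m'"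
      unfolding m' by (simp_all add: power_add power2_eq_square)
    have \<mu>_diff: "int m - 1 = int (Suc m')" "int m - 2 = int m'" using m' by simp_all
    show ?thesis
      unfolding M_div \<mu>_diff using False Pb_eq_nonsing_density[OF assms(1), of k "Suc m'"]
        Pb_eq_nonsing_density[OF assms(1), of "Suc k" m'] by simp
  qed (simp add: Pb_def)
  then show ?A ?B by blast+
qed

theorem theorem3p1:
  fixes p n :: nat and \<mu> :: int and q :: real
  assumes "prime p" and "q = 1 / real p" and "n > 0" and "\<mu> > 0"
  shows "Pb p n \<mu> =
           (1 - q) * Pb p (n - 1) \<mu>
         + (if n \<ge> 2 then q * (1 - q ^ (n - 1)) * Pb p (n - 2) \<mu> else 0)
         + q ^ n * (1 - q) * Pb p (n - 1) (\<mu> - 1)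
         + q ^ (n + 1) * Pb p n (\<mu> - 2)"
proof -
  obtain k where n: "n = Suc k" using assms(3) by (cases n) auto
  define m where "m = nat \<mu>"
  have \<mu>: "\<mu> = int m" "0 < m" using assms(4) by (simp_all add: m_def)
  have Pb: "Pb p n \<mu> = nonsing_density (Suc k) (p ^ m)" "Pb p (n - 1) \<mu> = nonsing_density k (p ^ m)"
    using Pb_eq_nonsing_density[OF assms(1), of "Suc k" m] Pb_eq_nonsing_density[OF assms(1), of k m] n \<mu>
    by simp_all
  have middle: "(if n \<ge> 2 then q * (1 - q ^ (n - 1)) * Pb p (n - 2) \<mu> else 0) =
      q * (1 - q ^ k) * nonsing_density (k - 1) (p ^ m)"
    using Pb_eq_nonsing_density[OF assms(1), of "k - 1" m] n \<mu> by (cases k) simp_all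
  have lower: "q ^ n * (1 - q) * Pb p (n - 1) (\<mu> - 1) + q ^ (n + 1) * Pb p n (\<mu> - 2) =
      (if m = 1 then 0 else q ^ Suc k * (1 - q) * nonsing_density k (p ^ m div p)
        + q ^ (k + 2) * nonsing_density (Suc k) (p ^ m div p\<^sup>2))"
    using Pb_lower_exponents[OF assms(1) \<mu>(2), of k] n \<mu>(1) by simp
  have "Pb p n \<mu> = (1 - q) * nonsing_density k (p ^ m) + q * (1 - q ^ k) * nonsing_density (k - 1) (p ^ m)
      + (if m = 1 then 0 else q ^ Suc k * (1 - q) * nonsing_density k (p ^ m div p)
        + q ^ (k + 2) * nonsing_density (Suc k) (p ^ m div p\<^sup>2))"
    unfolding Pb(1) by (rule nonsing_density_Suc_prime_power[OF assms(1) refl \<mu>(2) assms(2)])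
  then show ?thesis by (simp only: Pb(2) middle lower add.assoc)
qed

end
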